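(* Let $H$ be a real Hilbert space and let $\mathcal{S}\subset H$ be a dense subspace. Equip $H\otimes \mathcal{C}l_n$ with the $\mathcal{C}l_n$-valued inner product $\langle\cdot,\cdot\rangle$ induced by the inner product of $H$. Let $D:\mathcal{S}\otimes\mathcal{C}l_n\to\mathcal{S}\otimes\mathcal{C}l_n$ be a linear map which has a dual operator $D^*$ on $\mathcal{S}\otimes\mathcal{C}l_n$, i.e. $\langle Df,g\rangle=\langle f,D^*g\rangle$ for all $f,g\in\mathcal{S}\otimes\mathcal{C}l_n$, and suppose $D^*D=DD^*$. Let $G$ be an operator on $\mathcal{S}\otimes\mathcal{C}l_n$ that is an inverse of $D$, i.e. $DG=GD=I$. Define $\Pi=D^*G$. Then $\Pi$ is an isometric operator in $H\otimes\mathcal{C}l_n$: $\langle \Pi f,\Pi g\rangle=\langle f,g\rangle$ for all $f,g\in \mathcal{S}\otimes\mathcal{C}l_n$.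
   Context: $\mathcal{C}l_n$ is the real Clifford algebra generated by an orthonormal basis $e_1,\dots,e_n$ of $\mathbb{R}^n$ with relations $e_ie_j+e_je_i=-2\delta_{ij}e_0$, $e_0$ the identity. For $a=\sum_A a_Ae_A\in\mathcal{C}l_n$, the conjugation $\bar a$ is the anti-involution with $\overline{e_{j_1}\cdots e_{j_r}}=(-1)^r e_{j_r}\cdots e_{j_1}$ composed with reversion, i.e. $\bar a=\tilde a^{\dagger}$ where $\tilde{}$ is reversion and $a^\dagger$ is Clifford conjugation. The $\mathcal{C}l_n$-valued inner product on $H\otimes\mathcal{C}l_n$ is $\langle \sum_A u_Ae_A,\sum_B v_Be_B\rangle=\sum_{A,B}\langle u_A,v_B\rangle_H\,\overline{e_A}e_B$ (for $H=L^2$ of a measure space this is $\int\overline{u}v$). *)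

theory Defs
  imports "HOL-Analysis.Analysis"
begin

text \<open>An element sum_A a_A e_A is represented by its
coefficient function nat set => real, where only subsets A of {1..n} carry
coefficients (index sets A = {j1 < ... < jr}, e_A = e_j1 ... e_jr, e_{} = e_0).\<close>

definition clif_elems :: "nat \<Rightarrow> (nat set \<Rightarrow> real) set" where
  "clif_elems n = {a. \<forall>A. \<not> A \<subseteq> {1..n} \<longrightarrow> a A = 0}"

definition clif_basis :: "nat set \<Rightarrow> (nat set \<Rightarrow> real)" where
  "clif_basis A = (\<lambda>C. if C = A then 1 else 0)"

text \<open>Sign in e_A e_B = sign(A,B) e_(A symmetric-difference B), derived from
e_i e_j + e_j e_i = -2 delta_ij: one factor -1 per pair (a,b) with a in A, b in B,
b < a (anticommutation), and one factor -1 per common index (e_i e_i = -1).\<close>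

definition clif_sign :: "nat set \<Rightarrow> nat set \<Rightarrow> real" where
  "clif_sign A B = (-1) ^ (card {(a, b). a \<in> A \<and> b \<in> B \<and> b < a} + card (A \<inter> B))"

definition clif_mult :: "nat \<Rightarrow> (nat set \<Rightarrow> real) \<Rightarrow> (nat set \<Rightarrow> real) \<Rightarrow> (nat set \<Rightarrow> real)" where
  "clif_mult n x y = (\<lambda>C. \<Sum>A\<in>Pow {1..n}. \<Sum>B\<in>Pow {1..n}.
      (if (A - B) \<union> (B - A) = C then x A * y B * clif_sign A B else 0))"

text \<open>Conjugation: the anti-involution with conj(e_j1...e_jr) = (-1)^r e_jr ... e_j1
(reversion composed with the grade involution).  Since e_jr...e_j1 = (-1)^(r(r-1)/2) e_A,
this is conj(e_A) = (-1)^(r(r+1)/2) e_A with r = card A, extended linearly.\<close>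

definition clif_conj :: "(nat set \<Rightarrow> real) \<Rightarrow> (nat set \<Rightarrow> real)" where
  "clif_conj a = (\<lambda>A. (-1) ^ (card A * (card A + 1) div 2) * a A)"

text \<open>H tensor Cl_n: functions u : nat set => H with u_A = 0 unless A is a subset of {1..n};
u stands for sum_A u_A e_A.\<close>

definition HCl :: "nat \<Rightarrow> (nat set \<Rightarrow> 'h::real_vector) set" where
  "HCl n = {u. \<forall>A. \<not> A \<subseteq> {1..n} \<longrightarrow> u A = 0}"

definition SCl :: "nat \<Rightarrow> 'h::real_vector set \<Rightarrow> (nat set \<Rightarrow> 'h) set" where
  "SCl n S = {u \<in> HCl n. \<forall>A. u A \<in> S}"

definition cl_inner :: "nat \<Rightarrow> (nat set \<Rightarrow> 'h::real_inner) \<Rightarrow> (nat set \<Rightarrow> 'h) \<Rightarrow> (nat set \<Rightarrow> real)" where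
  "cl_inner n u v = (\<lambda>C. \<Sum>A\<in>Pow {1..n}. \<Sum>B\<in>Pow {1..n}.
      inner (u A) (v B) * clif_mult n (clif_conj (clif_basis A)) (clif_basis B) C)"

end

theory Submission
  imports Defs
begin

(* The Cl_n-valued inner product is Hermitian, <v, u> = conj <u, v>: conjugation is an
   anti-involution, which on basis elements is the sign identity
   conj (conj e_A * e_B) = conj e_B * e_A.  Hence D* is also a right adjoint,
   <D* f, g> = <f, D g>, and for Pi = D* G
     <Pi f, Pi g> = <G f, D D* G g> = <G f, D* D G g> = <G f, D* g> = <D G f, g> = <f, g>. *)

definition clif_conj_sign :: "nat \<Rightarrow> real" where
  "clif_conj_sign r = (-1) ^ (r * (r + 1) div 2)"

lemma clif_conj_eq: "clif_conj a = (\<lambda>A. clif_conj_sign (card A) * a A)"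
  unfolding clif_conj_def clif_conj_sign_def ..

lemma clif_conj_sign_square: "clif_conj_sign r * clif_conj_sign r = 1"
  unfolding clif_conj_sign_def by (simp add: power_add[symmetric] mult_2[symmetric] power_mult)

lemma clif_conj_sign_add:
  "clif_conj_sign (a + b) = clif_conj_sign a * clif_conj_sign b * (-1) ^ (a * b)"
proof -
  have "(a + b) * (a + b + 1) div 2 = a * (a + 1) div 2 + b * (b + 1) div 2 + a * b"
  proof -
    have "(a + b) * (a + b + 1) = a * (a + 1) + b * (b + 1) + 2 * a * b"
      by (simp add: algebra_simps)
    moreover obtain p q where "a * (a + 1) = 2 * p" "b * (b + 1) = 2 * q"
      by (metis dvd_def even_mult_iff odd_even_add odd_one)
    ultimately show ?thesis by simp
  qed
  then show ?thesis unfolding clif_conj_sign_def by (simp add: power_add)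
qed

lemma clif_conj_sign_double: "clif_conj_sign (2 * k) = (-1) ^ k"
proof -
  have "2 * k * (2 * k + 1) div 2 = 2 * (k * k) + k" by (simp add: algebra_simps)
  then show ?thesis unfolding clif_conj_sign_def by (simp add: power_add power_mult)
qed

lemma card_inversions_add:
  fixes A B :: "nat set"
  assumes "finite A" "finite B"
  shows "card {(a, b). a \<in> A \<and> b \<in> B \<and> b < a} + card {(a, b). a \<in> B \<and> b \<in> A \<and> b < a}
         + card (A \<inter> B) = card A * card B"
proof -
  let ?X = "{(a, b). a \<in> A \<and> b \<in> B \<and> b < a}"
  let ?Y = "{(a, b). a \<in> B \<and> b \<in> A \<and> b < a}"
  let ?Y' = "{(a, b). a \<in> A \<and> b \<in> B \<and> a < b}"
  let ?Z = "(\<lambda>x. (x, x)) ` (A \<inter> B)"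
  have fin: "finite (A \<times> B)" using assms by simp
  have split: "A \<times> B = ?X \<union> ?Y' \<union> ?Z" by auto
  have fin_parts: "finite ?X" "finite ?Y'" "finite ?Z" using assms by (auto intro: finite_subset[OF _ fin])
  have "card (A \<times> B) = card (?X \<union> ?Y') + card ?Z"
    unfolding split by (rule card_Un_disjoint) (use fin_parts in auto)
  also have "card (?X \<union> ?Y') = card ?X + card ?Y'"
    by (rule card_Un_disjoint) (use fin_parts in auto)
  finally have "card (A \<times> B) = card ?X + card ?Y' + card ?Z" .
  moreover have "card ?Y' = card ?Y"
    by (rule bij_betw_same_card[of "\<lambda>(a, b). (b, a)"]) (auto simp: bij_betw_def inj_on_def image_def)
  moreover have "card ?Z = card (A \<inter> B)" by (rule card_image) (auto simp: inj_on_def)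
  ultimately show ?thesis by (simp add: card_cartesian_product)
qed

lemma clif_sign_conj_swap:
  assumes "finite A" "finite B"
  shows "clif_conj_sign (card B) * clif_sign B A
       = clif_conj_sign (card (sym_diff A B)) * (clif_conj_sign (card A) * clif_sign A B)"
proof -
  define i where "i = card {(a, b). a \<in> A \<and> b \<in> B \<and> b < a}"
  define j where "j = card {(a, b). a \<in> B \<and> b \<in> A \<and> b < a}"
  define k where "k = card (A \<inter> B)"
  define c where "c = card (sym_diff A B)"
  have "c = card (A - B) + card (B - A)"
    unfolding c_def by (rule card_Un_disjoint) (use assms in auto)
  moreover have "card (A - B) + k = card A" "card (B - A) + k = card B"
    unfolding k_def using assms by (simp_all add: card_Diff_subset_Int Int_commute card_mono)
  ultimately have c_card: "c + 2 * k = card A + card B" by simp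
  have ijk: "i + j + k = card A * card B"
    unfolding i_def j_def k_def by (rule card_inversions_add[OF assms])
  have "clif_conj_sign (card A) * clif_conj_sign (card B) * (-1) ^ (i + j + k) = clif_conj_sign c * (-1) ^ k"
    using clif_conj_sign_add[of c "2 * k"] clif_conj_sign_add[of "card A" "card B"]
    by (simp add: c_card ijk clif_conj_sign_double neg_one_even_power)
  then have sign_c: "clif_conj_sign (card A) * clif_conj_sign (card B) * (-1) ^ (i + j) = clif_conj_sign c"
    by (simp add: power_add)
  have "clif_conj_sign c * clif_conj_sign (card A) * (-1) ^ i
      = (clif_conj_sign (card A) * clif_conj_sign (card A)) * ((-1) ^ i * (-1) ^ i)
        * (clif_conj_sign (card B) * (-1) ^ j)"
    unfolding sign_c[symmetric] by (simp add: power_add ac_simps)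
  also have "\<dots> = clif_conj_sign (card B) * (-1) ^ j"
    by (simp add: clif_conj_sign_square left_minus_one_mult_self)
  finally have "clif_conj_sign (card B) * (-1) ^ j = clif_conj_sign c * clif_conj_sign (card A) * (-1) ^ i"
    by simp
  then show ?thesis
    unfolding clif_sign_def i_def[symmetric] j_def[symmetric] k_def[symmetric] c_def[symmetric]
      Int_commute[of B A]
    by (simp add: power_add)
qed

lemma clif_mult_basis:
  assumes "A \<subseteq> {1..n}" "B \<subseteq> {1..n}"
  shows "clif_mult n (clif_basis A) (clif_basis B)
       = (\<lambda>C. clif_sign A B * clif_basis (sym_diff A B) C)"
proof
  fix C
  let ?v = "clif_sign A B * clif_basis (sym_diff A B) C"
  have "clif_mult n (clif_basis A) (clif_basis B) C
      = (\<Sum>A'\<in>Pow {1..n}. \<Sum>B'\<in>Pow {1..n}. if A' = A then (if B' = B then ?v else 0) else 0)"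
    unfolding clif_mult_def
    by (intro sum.cong refl) (simp add: clif_basis_def)
  also have "\<dots> = (\<Sum>A'\<in>Pow {1..n}. if A' = A then ?v else 0)"
    using assms by (intro sum.cong refl) (simp add: sum.delta)
  also have "\<dots> = ?v"
    using assms by (simp add: sum.delta)
  finally show "clif_mult n (clif_basis A) (clif_basis B) C = ?v" .
qed

lemma clif_mult_scale_left: "clif_mult n (\<lambda>C. c * x C) y = (\<lambda>C. c * clif_mult n x y C)"
  unfolding clif_mult_def sum_distrib_left
  by (intro ext sum.cong refl) simp

lemma clif_conj_basis: "clif_conj (clif_basis A) = (\<lambda>C. clif_conj_sign (card A) * clif_basis A C)"
  unfolding clif_conj_eq clif_basis_def by auto

lemma clif_conj_conj: "clif_conj (clif_conj a) = a"
  unfolding clif_conj_eq by (simp add: mult.assoc[symmetric] clif_conj_sign_square)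

lemma clif_conj_mult_conj_basis:
  assumes "A \<subseteq> {1..n}" "B \<subseteq> {1..n}"
  shows "clif_conj (clif_mult n (clif_conj (clif_basis A)) (clif_basis B))
       = clif_mult n (clif_conj (clif_basis B)) (clif_basis A)"
proof
  fix C
  have "clif_conj (clif_mult n (clif_conj (clif_basis A)) (clif_basis B)) C
      = clif_conj_sign (card C) * (clif_conj_sign (card A) * (clif_sign A B * clif_basis (sym_diff A B) C))"
    by (simp only: clif_conj_basis clif_mult_scale_left clif_mult_basis[OF assms]) (simp add: clif_conj_eq)
  also have "\<dots> = clif_conj_sign (card B) * (clif_sign B A * clif_basis (sym_diff A B) C)"
  proof (cases "C = sym_diff A B")
    case True
    have "finite A" "finite B" using assms finite_subset by blast+
    from clif_sign_conj_swap[OF this] show ?thesis using True by (simp add: clif_basis_def)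
  qed (simp add: clif_basis_def)
  also have "\<dots> = clif_mult n (clif_conj (clif_basis B)) (clif_basis A) C"
    by (simp only: clif_conj_basis clif_mult_scale_left clif_mult_basis[OF assms(2,1)] Un_commute)
  finally show "clif_conj (clif_mult n (clif_conj (clif_basis A)) (clif_basis B)) C
       = clif_mult n (clif_conj (clif_basis B)) (clif_basis A) C" .
qed

lemma cl_inner_commute: "cl_inner n v u = clif_conj (cl_inner n u v)"
proof
  fix C
  have "cl_inner n v u C = (\<Sum>A\<in>Pow {1..n}. \<Sum>B\<in>Pow {1..n}.
      inner (v B) (u A) * clif_mult n (clif_conj (clif_basis B)) (clif_basis A) C)"
    unfolding cl_inner_def by (rule sum.swap)
  also have "\<dots> = (\<Sum>A\<in>Pow {1..n}. \<Sum>B\<in>Pow {1..n}.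
      inner (u A) (v B) * clif_conj (clif_mult n (clif_conj (clif_basis A)) (clif_basis B)) C)"
    by (intro sum.cong refl) (simp add: clif_conj_mult_conj_basis inner_commute)
  also have "\<dots> = clif_conj (cl_inner n u v) C"
    unfolding cl_inner_def clif_conj_eq by (simp add: sum_distrib_left mult_ac)
  finally show "cl_inner n v u C = clif_conj (cl_inner n u v) C" .
qed

lemma cl_inner_adjoint_sym:
  assumes "cl_inner n (D g) f = cl_inner n g (Dstar f)"
  shows "cl_inner n (Dstar f) g = cl_inner n f (D g)"
proof -
  have "cl_inner n (Dstar f) g = clif_conj (cl_inner n (D g) f)"
    unfolding assms by (rule cl_inner_commute)
  also have "\<dots> = cl_inner n f (D g)"
    unfolding cl_inner_commute[of n "D g" f] by (rule clif_conj_conj)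
  finally show ?thesis .
qed

lemma adjoint_comp_right_inverse_isometric:
  fixes ip :: "'a \<Rightarrow> 'a \<Rightarrow> 'b"
  assumes "f \<in> V" "g \<in> V"
    and Dstar_maps: "\<And>f. f \<in> V \<Longrightarrow> Dstar f \<in> V"
    and G_maps: "\<And>f. f \<in> V \<Longrightarrow> G f \<in> V"
    and adjoint_left: "\<And>f g. f \<in> V \<Longrightarrow> g \<in> V \<Longrightarrow> ip (D f) g = ip f (Dstar g)"
    and adjoint_right: "\<And>f g. f \<in> V \<Longrightarrow> g \<in> V \<Longrightarrow> ip (Dstar f) g = ip f (D g)"
    and normal: "\<And>f. f \<in> V \<Longrightarrow> Dstar (D f) = D (Dstar f)"
    and right_inverse: "\<And>f. f \<in> V \<Longrightarrow> D (G f) = f"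
  shows "ip (Dstar (G f)) (Dstar (G g)) = ip f g"
proof -
  have Gf: "G f \<in> V" and Gg: "G g \<in> V" using G_maps assms(1,2) by auto
  have "ip (Dstar (G f)) (Dstar (G g)) = ip (G f) (D (Dstar (G g)))"
    using adjoint_right Gf Gg Dstar_maps by blast
  also have "D (Dstar (G g)) = Dstar g"
    using normal[OF Gg] right_inverse[OF assms(2)] by simp
  also have "ip (G f) (Dstar g) = ip (D (G f)) g"
    using adjoint_left[OF Gf assms(2)] by simp
  also have "D (G f) = f"
    using right_inverse[OF assms(1)] .
  finally show ?thesis .
qed

theorem mainTheorem1:
  fixes n :: nat
    and S :: "'h::{real_inner, complete_space} set"
    and D Dstar G :: "(nat set \<Rightarrow> 'h) \<Rightarrow> (nat set \<Rightarrow> 'h)"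
  assumes S_subspace: "subspace S"
    and S_dense: "closure S = UNIV"
    and D_maps: "\<forall>f\<in>SCl n S. D f \<in> SCl n S"
    and D_add: "\<forall>f\<in>SCl n S. \<forall>g\<in>SCl n S. D (\<lambda>A. f A + g A) = (\<lambda>A. D f A + D g A)"
    and D_scale: "\<forall>f\<in>SCl n S. \<forall>c::real. D (\<lambda>A. c *\<^sub>R f A) = (\<lambda>A. c *\<^sub>R D f A)"
    and Dstar_maps: "\<forall>f\<in>SCl n S. Dstar f \<in> SCl n S"
    and dual: "\<forall>f\<in>SCl n S. \<forall>g\<in>SCl n S. cl_inner n (D f) g = cl_inner n f (Dstar g)"
    and normal: "\<forall>f\<in>SCl n S. Dstar (D f) = D (Dstar f)"
    and G_maps: "\<forall>f\<in>SCl n S. G f \<in> SCl n S"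
    and G_inverse: "\<forall>f\<in>SCl n S. D (G f) = f \<and> G (D f) = f"
  shows "\<forall>f\<in>SCl n S. \<forall>g\<in>SCl n S.
           cl_inner n ((Dstar \<circ> G) f) ((Dstar \<circ> G) g) = cl_inner n f g"
proof (intro ballI)
  fix f g assume f: "f \<in> SCl n S" and g: "g \<in> SCl n S"
  have adjoint_right: "cl_inner n (Dstar a) b = cl_inner n a (D b)"
    if "a \<in> SCl n S" "b \<in> SCl n S" for a b
    using dual[rule_format, OF that(2,1)] by (rule cl_inner_adjoint_sym)
  have "cl_inner n (Dstar (G f)) (Dstar (G g)) = cl_inner n f g"
    by (rule adjoint_comp_right_inverse_isometric[OF f g, where D = D])
      (simp_all add: Dstar_maps G_maps dual normal G_inverse adjoint_right)
  then show "cl_inner n ((Dstar \<circ> G) f) ((Dstar \<circ> G) g) = cl_inner n f g"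
    by simp
qed

end
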